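(* Let $k\ge 2$ be a fixed integer. For $n\ge 1$, let $X_n$ be the random variable counting the number of occurrences of the pattern $12\cdots k$ in a permutation $p=p_1p_2\cdots p_n$ chosen uniformly at random among all $n!$ permutations of length $n$, i.e. the number of index sets $1\le i_1<i_2<\cdots<i_k\le n$ with $p_{i_1}<p_{i_2}<\cdots<p_{i_k}$. Then there exists a constant $c>0$ (depending only on $k$) such that for all $n\ge k$, \[\operatorname{Var}(X_n)\ge c\, n^{2k-1}.\]
   Context: A permutation of length $n$ is chosen uniformly at random, each with probability $1/n!$. *)

theory Defs
  imports "HOL-Probability.Probability" "HOL-Combinatorics.Permutations"
begin

text \<open>Permutations of length n are bijections of the index set {0..<n} (0-based).
  An occurrence of the pattern 12...k is a k-element set of positions on which p is increasing.\<close>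

definition inc_occurrences :: "nat \<Rightarrow> nat \<Rightarrow> (nat \<Rightarrow> nat) \<Rightarrow> nat" where
  "inc_occurrences k n p =
     card {I. I \<subseteq> {..<n} \<and> card I = k \<and> (\<forall>i\<in>I. \<forall>j\<in>I. i < j \<longrightarrow> p i < p j)}"

definition uniform_perm :: "nat \<Rightarrow> (nat \<Rightarrow> nat) pmf" where
  "uniform_perm n = pmf_of_set {p. p permutes {..<n}}"

end

theory Submission
  imports Defs
begin

text \<open>
  Let \<open>Y p = (\<Sum>i<n. (i - (n - 1) / 2) * (p i - (n - 1) / 2))\<close> be Spearman's rank statistic.
  As \<open>Y\<close> has mean zero, Cauchy-Schwarz gives \<open>Var X \<ge> E[X Y]\<^sup>2 / E[Y\<^sup>2]\<close>, and the
  second moment of a linear permutation statistic gives \<open>E[Y\<^sup>2] = n\<^sup>2 (n - 1) (n + 1)\<^sup>2 / 144\<close>.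
  Write \<open>X\<close> as the sum over \<open>k\<close>-sets \<open>I\<close> of the indicator that \<open>p\<close> increases on \<open>I\<close>.
  Exactly one of the \<open>k!\<close> rearrangements of \<open>p\<close> on \<open>I\<close> increases, so the part \<open>R\<close> of \<open>Y\<close>
  that is invariant under these rearrangements contributes \<open>E[1\<^sub>I R] = E[R] / k! = 0\<close>.
  The rest, \<open>(\<Sum>i\<in>I. \<Sum>j\<in>I. (i - j) * (p i - p j)) / (2 k)\<close>, has only nonnegative terms
  when \<open>p\<close> increases on \<open>I\<close>; hence it is at least a constant times the product of the
  sums of absolute differences of \<open>I\<close> and of \<open>p ` I\<close>. Averaging over \<open>p\<close> and summing over \<open>I\<close> gives
  \<open>E[X Y] \<ge> c\<^sub>k * (n - 2 choose k - 2) * n\<^sup>4\<close>, hence \<open>Var X \<ge> c\<^sub>k' * n\<^bsup>2k - 4\<^esup> * n\<^sup>8 / n\<^sup>5\<close>.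
\<close>

section \<open>Sorting a function on a finite set\<close>

lemma strict_mono_on_eq_if_image_eq:
  fixes f g :: "'a::linorder \<Rightarrow> 'b::linorder"
  assumes "finite I" "strict_mono_on I f" "strict_mono_on I g" "f ` I = g ` I" "x \<in> I"
  shows "f x = g x"
proof -
  define xs where "xs = sorted_list_of_set I"
  have map_eq: "map h xs = sorted_list_of_set (h ` I)" if h: "strict_mono_on I h" for h :: "'a \<Rightarrow> 'b"
  proof -
    have "sorted_wrt (<) xs" "set xs = I" "length xs = card I"
      using \<open>finite I\<close> by (simp_all add: xs_def)
    moreover have "card (h ` I) = card I"
      using strict_mono_on_imp_inj_on[OF h] by (rule card_image)
    ultimately have "sorted_wrt (<) (map h xs) \<and> set (map h xs) = h ` I \<and> length (map h xs) = card (h ` I)"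
      by (auto simp: sorted_wrt_map intro: sorted_wrt_mono_rel[of _ "(<)"] strict_mono_onD[OF h])
    then show ?thesis
      using sorted_list_of_set_unique[of "h ` I" "map h xs"] \<open>finite I\<close> by (metis finite_imageI)
  qed
  have "map f xs = map g xs"
    using map_eq assms(2-4) by simp
  then show ?thesis
    using assms(1,5) by (simp add: xs_def)
qed

lemma obtain_strict_mono_bij_betw_lessThan:
  fixes M :: "'a::linorder set"
  assumes "finite M"
  obtains h where "bij_betw h {..<card M} M" "strict_mono_on {..<card M} h"
proof
  let ?xs = "sorted_list_of_set M"
  show "bij_betw ((!) ?xs) {..<card M} M"
    using assms by (intro bij_betw_nth) simp_all
  show "strict_mono_on {..<card M} ((!) ?xs)"
    using assms by (intro strict_mono_onI sorted_wrt_nth_less[of "(<)"]) simp_all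
qed

lemma obtain_strict_mono_bij_betw:
  fixes A :: "'a::linorder set" and B :: "'b::linorder set"
  assumes "finite A" "finite B" "card A = card B"
  obtains h where "bij_betw h A B" "strict_mono_on A h"
proof -
  obtain e where e: "bij_betw e {..<card A} A" "strict_mono_on {..<card A} e"
    using obtain_strict_mono_bij_betw_lessThan[OF assms(1)] by blast
  obtain f where f: "bij_betw f {..<card A} B" "strict_mono_on {..<card A} f"
    using obtain_strict_mono_bij_betw_lessThan[OF assms(2)] assms(3) by metis
  define e' where "e' = inv_into {..<card A} e"
  have e': "bij_betw e' A {..<card A}"
    unfolding e'_def using e(1) by (rule bij_betw_inv_into)
  have "strict_mono_on A (f \<circ> e')"
  proof (rule strict_mono_onI)
    fix x y assume xy: "x \<in> A" "y \<in> A" "x < y"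
    have e'xy: "e' x \<in> {..<card A}" "e' y \<in> {..<card A}"
      using xy(1,2) bij_betwE[OF e'] by blast+
    have "e (e' x) < e (e' y)"
      using xy e(1) by (simp add: e'_def bij_betw_inv_into_right)
    then have "e' x < e' y"
      using strict_mono_on_less[OF e(2) e'xy] by simp
    then show "(f \<circ> e') x < (f \<circ> e') y"
      using strict_mono_onD[OF f(2) e'xy] by simp
  qed
  with bij_betw_trans[OF e' f(1)] show thesis
    by (rule that)
qed

lemma obtain_permutes_strict_mono_on:
  fixes p :: "'a::linorder \<Rightarrow> 'b::linorder"
  assumes "finite I" "inj_on p I"
  obtains \<sigma> where "\<sigma> permutes I" "strict_mono_on I (p \<circ> \<sigma>)"
proof -
  have "card I = card (p ` I)"
    using assms(2) by (simp add: card_image)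
  then obtain h where h: "bij_betw h I (p ` I)" "strict_mono_on I h"
    using obtain_strict_mono_bij_betw[of I "p ` I"] assms(1) by blast
  define \<sigma> where "\<sigma> x = (if x \<in> I then inv_into I p (h x) else x)" for x
  have "bij_betw (inv_into I p \<circ> h) I I"
    using bij_betw_trans[OF h(1) bij_betw_inv_into[OF inj_on_imp_bij_betw[OF assms(2)]]] .
  then have "bij_betw \<sigma> I I"
    by (rule bij_betw_cong[THEN iffD1, rotated]) (simp add: \<sigma>_def)
  then have "\<sigma> permutes I"
    by (rule bij_imp_permutes) (simp add: \<sigma>_def)
  moreover have "p (\<sigma> x) = h x" if "x \<in> I" for x
    using that bij_betwE[OF h(1)] by (simp add: \<sigma>_def f_inv_into_f)
  then have "strict_mono_on I (p \<circ> \<sigma>)"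
    using h(2) by (simp add: strict_mono_on_def)
  ultimately show thesis
    by (rule that)
qed

lemma card_sorting_permutations:
  fixes p :: "'a::linorder \<Rightarrow> 'b::linorder"
  assumes "finite I" "inj_on p I"
  shows "card {\<sigma>. \<sigma> permutes I \<and> strict_mono_on I (p \<circ> \<sigma>)} = 1"
proof -
  obtain \<sigma>\<^sub>0 where \<sigma>\<^sub>0: "\<sigma>\<^sub>0 permutes I" "strict_mono_on I (p \<circ> \<sigma>\<^sub>0)"
    using obtain_permutes_strict_mono_on[OF assms] .
  have "\<sigma> = \<sigma>\<^sub>0" if \<sigma>: "\<sigma> permutes I" "strict_mono_on I (p \<circ> \<sigma>)" for \<sigma>
  proof
    fix x
    show "\<sigma> x = \<sigma>\<^sub>0 x"
    proof (cases "x \<in> I")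
      case True
      have "(p \<circ> \<sigma>) ` I = (p \<circ> \<sigma>\<^sub>0) ` I"
        using \<sigma>(1) \<sigma>\<^sub>0(1) by (metis image_comp permutes_image)
      then have "p (\<sigma> x) = p (\<sigma>\<^sub>0 x)"
        using strict_mono_on_eq_if_image_eq[OF assms(1) \<sigma>(2) \<sigma>\<^sub>0(2) _ True] by simp
      then show ?thesis
        using assms(2) True \<sigma>(1) \<sigma>\<^sub>0(1) by (simp add: inj_on_eq_iff permutes_in_image)
    next
      case False
      then show ?thesis
        using \<sigma>(1) \<sigma>\<^sub>0(1) by (simp add: permutes_not_in)
    qed
  qed
  then have "{\<sigma>. \<sigma> permutes I \<and> strict_mono_on I (p \<circ> \<sigma>)} = {\<sigma>\<^sub>0}"
    using \<sigma>\<^sub>0 by blast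
  then show ?thesis
    by simp
qed

lemma sum_permutes_strict_mono_on:
  fixes H :: "('a::linorder \<Rightarrow> 'a) \<Rightarrow> real"
  assumes "finite A" "I \<subseteq> A"
    and H: "\<And>p \<sigma>. p permutes A \<Longrightarrow> \<sigma> permutes I \<Longrightarrow> H (p \<circ> \<sigma>) = H p"
  shows "(\<Sum>p | p permutes A. of_bool (strict_mono_on I p) * H p)
           = (\<Sum>p | p permutes A. H p) / fact (card I)"
proof -
  let ?P = "{p. p permutes A}" and ?S = "{\<sigma>. \<sigma> permutes I}"
  have "finite I"
    using assms(1,2) by (rule finite_subset[rotated])
  have sorting: "(\<Sum>\<sigma>\<in>?S. of_bool (strict_mono_on I (p \<circ> \<sigma>))) = (1::real)" if "p \<in> ?P" for p
    using card_sorting_permutations[OF \<open>finite I\<close> permutes_inj_on[of p A I]] that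
    by (simp add: Collect_conj_eq finite_permutations[OF \<open>finite I\<close>])
  have "(\<Sum>p\<in>?P. H p) = (\<Sum>p\<in>?P. \<Sum>\<sigma>\<in>?S. of_bool (strict_mono_on I (p \<circ> \<sigma>)) * H (p \<circ> \<sigma>))"
    using sorting H by (simp add: sum_distrib_right[symmetric] del: sum_of_bool_mult_eq)
  also have "\<dots> = (\<Sum>\<sigma>\<in>?S. \<Sum>p\<in>?P. of_bool (strict_mono_on I (p \<circ> \<sigma>)) * H (p \<circ> \<sigma>))"
    by (rule sum.swap)
  also have "\<dots> = (\<Sum>\<sigma>\<in>?S. \<Sum>p\<in>?P. of_bool (strict_mono_on I p) * H p)"
    using assms(2) by (intro sum.cong refl sum_permutations_compose_right[symmetric]) (auto intro: permutes_subset)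
  also have "\<dots> = fact (card I) * (\<Sum>p\<in>?P. of_bool (strict_mono_on I p) * H p)"
    using card_permutations[OF refl \<open>finite I\<close>] by simp
  finally show ?thesis
    by (simp add: field_simps)
qed

section \<open>Sums over all permutations of a finite set\<close>

lemma sum_permutes_apply_eq:
  assumes "i \<in> A" "j \<in> A"
  shows "(\<Sum>p | p permutes A. F (p i)) = (\<Sum>p | p permutes A. F (p j))"
proof -
  have "(\<Sum>p | p permutes A. F (p j)) = (\<Sum>p | p permutes A. F ((p \<circ> Transposition.transpose i j) j))"
    using assms by (intro sum_permutations_compose_right permutes_swap_id)
  then show ?thesis
    by simp
qed

lemma sum_permutes_apply2_eq:
  assumes "i \<in> A" "j \<in> A" "i \<noteq> j" "a \<in> A" "b \<in> A" "a \<noteq> b"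
  shows "(\<Sum>p | p permutes A. F (p i) (p j)) = (\<Sum>p | p permutes A. F (p a) (p b))"
proof -
  define \<rho> where
    "\<rho> = Transposition.transpose j (Transposition.transpose a i b) \<circ> Transposition.transpose a i"
  have "\<rho> permutes A"
    unfolding \<rho>_def using assms by (intro permutes_compose permutes_swap_id) (auto simp: Transposition.transpose_def)
  moreover have "\<rho> a = i" "\<rho> b = j"
    using assms by (auto simp: \<rho>_def Transposition.transpose_def)
  ultimately show ?thesis
    using sum_permutations_compose_right[of \<rho> A "\<lambda>p. F (p a) (p b)"] by simp
qed

lemma sum_permutes_reindex:
  assumes "p permutes A"
  shows "(\<Sum>i\<in>A. G (p i)) = (\<Sum>x\<in>A. G x)"
  using sum.permute[OF assms, of G] by (simp add: o_def)

lemma sum_permutes_apply: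
  fixes F :: "'a \<Rightarrow> real"
  assumes "finite A" "i \<in> A"
  shows "real (card A) * (\<Sum>p | p permutes A. F (p i)) = fact (card A) * (\<Sum>x\<in>A. F x)"
proof -
  let ?P = "{p. p permutes A}"
  have "(\<Sum>j\<in>A. \<Sum>p\<in>?P. F (p j)) = (\<Sum>j\<in>A. \<Sum>p\<in>?P. F (p i))"
    by (intro sum.cong refl sum_permutes_apply_eq assms(2))
  then have "real (card A) * (\<Sum>p\<in>?P. F (p i)) = (\<Sum>j\<in>A. \<Sum>p\<in>?P. F (p j))"
    by simp
  also have "\<dots> = (\<Sum>p\<in>?P. \<Sum>j\<in>A. F (p j))"
    by (rule sum.swap)
  also have "\<dots> = (\<Sum>p\<in>?P. \<Sum>x\<in>A. F x)"
    by (intro sum.cong refl sum_permutes_reindex) simp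
  also have "\<dots> = fact (card A) * (\<Sum>x\<in>A. F x)"
    using card_permutations[OF refl assms(1)] by simp
  finally show ?thesis .
qed

lemma sum_permutes_apply2:
  fixes F :: "'a \<Rightarrow> 'a \<Rightarrow> real"
  assumes "finite A" "a \<in> A" "b \<in> A" "a \<noteq> b"
  shows "real (card A) * (real (card A) - 1) * (\<Sum>p | p permutes A. F (p a) (p b))
           = fact (card A) * ((\<Sum>x\<in>A. \<Sum>y\<in>A. F x y) - (\<Sum>x\<in>A. F x x))"
proof -
  let ?P = "{p. p permutes A}" and ?S = "\<Sum>p | p permutes A. F (p a) (p b)"
  have row: "(\<Sum>j\<in>A. \<Sum>p\<in>?P. F (p i) (p j)) = (\<Sum>p\<in>?P. F (p i) (p i)) + (real (card A) - 1) * ?S"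
    if "i \<in> A" for i
  proof -
    have "(\<Sum>j\<in>A - {i}. \<Sum>p\<in>?P. F (p i) (p j)) = (\<Sum>j\<in>A - {i}. ?S)"
      using that assms by (intro sum.cong refl sum_permutes_apply2_eq) auto
    moreover have "card A \<ge> 1"
      using that assms(1) card_0_eq by fastforce
    ultimately show ?thesis
      using that assms(1) by (simp add: sum.remove)
  qed
  have reindex: "(\<Sum>i\<in>A. \<Sum>j\<in>A. F (p i) (p j)) = (\<Sum>x\<in>A. \<Sum>y\<in>A. F x y)"
    if "p permutes A" for p
  proof -
    have "(\<Sum>i\<in>A. \<Sum>j\<in>A. F (p i) (p j)) = (\<Sum>i\<in>A. \<Sum>y\<in>A. F (p i) y)"
      using that by (intro sum.cong refl sum_permutes_reindex)
    also have "\<dots> = (\<Sum>x\<in>A. \<Sum>y\<in>A. F x y)"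
      using that by (rule sum_permutes_reindex)
    finally show ?thesis .
  qed
  have "fact (card A) * (\<Sum>x\<in>A. \<Sum>y\<in>A. F x y) = (\<Sum>p\<in>?P. \<Sum>i\<in>A. \<Sum>j\<in>A. F (p i) (p j))"
    using card_permutations[OF refl assms(1)] reindex by simp
  also have "\<dots> = (\<Sum>i\<in>A. \<Sum>j\<in>A. \<Sum>p\<in>?P. F (p i) (p j))"
    by (simp add: sum.swap[of _ ?P])
  also have "\<dots> = (\<Sum>i\<in>A. \<Sum>p\<in>?P. F (p i) (p i)) + real (card A) * (real (card A) - 1) * ?S"
    using row by (simp add: sum.distrib)
  also have "(\<Sum>i\<in>A. \<Sum>p\<in>?P. F (p i) (p i)) = (\<Sum>i\<in>A. \<Sum>p\<in>?P. F (p a) (p a))"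
    by (intro sum.cong refl sum_permutes_apply_eq assms(2))
  also have "\<dots> = fact (card A) * (\<Sum>x\<in>A. F x x)"
    using sum_permutes_apply[OF assms(1,2), of "\<lambda>x. F x x"] by simp
  finally show ?thesis
    by (simp add: algebra_simps)
qed

lemma sum_permutes_linear_statistic:
  fixes a b :: "'a \<Rightarrow> real"
  assumes "finite A" "(\<Sum>x\<in>A. b x) = 0"
  shows "(\<Sum>p | p permutes A. \<Sum>i\<in>A. a i * b (p i)) = 0"
proof -
  have "(\<Sum>p | p permutes A. b (p i)) = 0" if "i \<in> A" for i
    using sum_permutes_apply[OF assms(1) that, of b] assms that by auto
  then have "(\<Sum>i\<in>A. a i * (\<Sum>p | p permutes A. b (p i))) = 0"
    by simp
  then show ?thesis
    by (simp add: sum.swap[of _ "{p. p permutes A}"] sum_distrib_left)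
qed

lemma sum_permutes_apply_mult:
  fixes b :: "'a \<Rightarrow> real"
  assumes "finite A" "(\<Sum>x\<in>A. b x) = 0" "i \<in> A" "j \<in> A"
  shows "real (card A) * (real (card A) - 1) * (\<Sum>p | p permutes A. b (p i) * b (p j))
           = fact (card A) * (if i = j then real (card A) - 1 else - 1) * (\<Sum>x\<in>A. (b x)\<^sup>2)"
proof (cases "i = j")
  case True
  let ?n = "real (card A)" and ?S = "\<Sum>p | p permutes A. b (p i) * b (p i)"
  have "?n * ?S = fact (card A) * (\<Sum>x\<in>A. (b x)\<^sup>2)"
    using sum_permutes_apply[OF assms(1,3), of "\<lambda>x. b x * b x"] by (simp add: power2_eq_square)
  then have "(?n - 1) * (?n * ?S) = (?n - 1) * (fact (card A) * (\<Sum>x\<in>A. (b x)\<^sup>2))"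
    by simp
  then show ?thesis
    using True by (simp add: mult_ac)
next
  case False
  then show ?thesis
    using sum_permutes_apply2[OF assms(1,3,4) False, of "\<lambda>x y. b x * b y"] assms(2)
    by (simp add: power2_eq_square sum_distrib_left[symmetric] sum_distrib_right[symmetric])
qed

lemma sum_permutes_linear_statistic_sq:
  fixes a b :: "'a \<Rightarrow> real"
  assumes "finite A" "(\<Sum>x\<in>A. a x) = 0" "(\<Sum>x\<in>A. b x) = 0"
  shows "(real (card A) - 1) * (\<Sum>p | p permutes A. (\<Sum>i\<in>A. a i * b (p i))\<^sup>2)
           = fact (card A) * (\<Sum>i\<in>A. (a i)\<^sup>2) * (\<Sum>x\<in>A. (b x)\<^sup>2)"
proof (cases "A = {}")
  case False
  let ?P = "{p. p permutes A}" and ?n = "real (card A)" and ?B = "\<Sum>x\<in>A. (b x)\<^sup>2"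
  have "(\<Sum>p\<in>?P. (\<Sum>i\<in>A. a i * b (p i))\<^sup>2)
      = (\<Sum>p\<in>?P. \<Sum>i\<in>A. \<Sum>j\<in>A. a i * a j * (b (p i) * b (p j)))"
    by (simp add: power2_eq_square sum_product algebra_simps)
  also have "\<dots> = (\<Sum>i\<in>A. \<Sum>j\<in>A. a i * a j * (\<Sum>p\<in>?P. b (p i) * b (p j)))"
    by (simp add: sum.swap[of _ ?P] sum_distrib_left)
  finally have "?n * (?n - 1) * (\<Sum>p\<in>?P. (\<Sum>i\<in>A. a i * b (p i))\<^sup>2)
      = (\<Sum>i\<in>A. \<Sum>j\<in>A. a i * a j * (?n * (?n - 1) * (\<Sum>p\<in>?P. b (p i) * b (p j))))"
    by (simp add: sum_distrib_left mult_ac)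
  also have "\<dots> = (\<Sum>i\<in>A. fact (card A) * ?B * ?n * (a i)\<^sup>2)"
  proof (intro sum.cong refl)
    fix i assume "i \<in> A"
    have "(\<Sum>j\<in>A. a i * a j * (?n * (?n - 1) * (\<Sum>p\<in>?P. b (p i) * b (p j))))
        = (\<Sum>j\<in>A. fact (card A) * ?B * a i * (if i = j then ?n * a j else 0)
                   - fact (card A) * ?B * a i * a j)"
      using sum_permutes_apply_mult[OF assms(1,3) \<open>i \<in> A\<close>]
      by (intro sum.cong refl) (auto simp: algebra_simps)
    also have "\<dots> = fact (card A) * ?B * ?n * (a i)\<^sup>2"
      using \<open>i \<in> A\<close> assms(1,2)
      by (simp add: sum_subtractf sum_distrib_left[symmetric] sum_distrib_right[symmetric]
          power2_eq_square mult_ac)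
    finally show "(\<Sum>j\<in>A. a i * a j * (?n * (?n - 1) * (\<Sum>p\<in>?P. b (p i) * b (p j))))
        = fact (card A) * ?B * ?n * (a i)\<^sup>2" .
  qed
  finally have "?n * ((?n - 1) * (\<Sum>p\<in>?P. (\<Sum>i\<in>A. a i * b (p i))\<^sup>2))
      = ?n * (fact (card A) * (\<Sum>i\<in>A. (a i)\<^sup>2) * ?B)"
    by (simp add: sum_distrib_left mult_ac)
  then show ?thesis
    using assms(1) False by simp
qed simp

definition centred :: "nat \<Rightarrow> nat \<Rightarrow> real" where
  "centred n x = real x - (real n - 1) / 2"

definition spearman :: "nat \<Rightarrow> (nat \<Rightarrow> nat) \<Rightarrow> real" where
  "spearman n p = (\<Sum>i<n. centred n i * centred n (p i))"

lemma sum_lessThan_real: "2 * (\<Sum>x<n. real x) = real n * (real n - 1)"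
  by (induction n) (auto simp: algebra_simps)

lemma sum_lessThan_real_sq: "6 * (\<Sum>x<n. (real x)\<^sup>2) = real n * (real n - 1) * (2 * real n - 1)"
  by (induction n) (auto simp: algebra_simps power2_eq_square)

lemma sum_centred: "(\<Sum>x<n. centred n x) = 0"
  using sum_lessThan_real[of n] by (simp add: centred_def sum_subtractf)

lemma sum_centred_sq: "12 * (\<Sum>x<n. (centred n x)\<^sup>2) = real n * (real n - 1) * (real n + 1)"
proof -
  have sq: "(centred n x)\<^sup>2 = (real x)\<^sup>2 - (real n - 1) * real x + ((real n - 1) / 2)\<^sup>2" for x
    by (simp add: centred_def power2_eq_square field_simps)
  have "(\<Sum>x<n. (centred n x)\<^sup>2)
      = (\<Sum>x<n. (real x)\<^sup>2) - (real n - 1) * (\<Sum>x<n. real x) + real n * ((real n - 1) / 2)\<^sup>2"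
    unfolding sq by (simp add: sum.distrib sum_subtractf sum_distrib_left)
  moreover have "(\<Sum>x<n. real x) = real n * (real n - 1) / 2"
    using sum_lessThan_real[of n] by simp
  moreover have "(\<Sum>x<n. (real x)\<^sup>2) = real n * (real n - 1) * (2 * real n - 1) / 6"
    using sum_lessThan_real_sq[of n] by simp
  ultimately show ?thesis
    by (simp add: field_simps power2_eq_square)
qed

lemma sum_spearman: "(\<Sum>p | p permutes {..<n}. spearman n p) = 0"
  unfolding spearman_def by (rule sum_permutes_linear_statistic) (simp_all add: sum_centred)

lemma sum_spearman_sq:
  assumes "2 \<le> n"
  shows "144 * (\<Sum>p | p permutes {..<n}. (spearman n p)\<^sup>2)
           = fact n * (real n)\<^sup>2 * (real n - 1) * (real n + 1)\<^sup>2"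
proof -
  let ?S = "\<Sum>p | p permutes {..<n}. (spearman n p)\<^sup>2" and ?U = "\<Sum>x<n. (centred n x)\<^sup>2"
  have "(real n - 1) * ?S = fact n * ?U\<^sup>2"
    using sum_permutes_linear_statistic_sq[of "{..<n}" "centred n" "centred n"] assms
    by (simp add: spearman_def sum_centred power2_eq_square)
  then have "(real n - 1) * (144 * ?S) = 144 * (fact n * ?U\<^sup>2)"
    by (metis mult.left_commute)
  also have "\<dots> = fact n * (12 * ?U)\<^sup>2"
    by (simp add: power_mult_distrib mult_ac)
  also have "\<dots> = (real n - 1) * (fact n * (real n)\<^sup>2 * (real n - 1) * (real n + 1)\<^sup>2)"
    unfolding sum_centred_sq by (simp add: power2_eq_square mult_ac)
  finally show ?thesis
    using assms by simp
qed

definition dispersion :: "'a set \<Rightarrow> ('a \<Rightarrow> real) \<Rightarrow> real" where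
  "dispersion I f = (\<Sum>i\<in>I. \<Sum>j\<in>I. \<bar>f i - f j\<bar>)"

lemma dispersion_nonneg: "0 \<le> dispersion I f"
  unfolding dispersion_def by (intro sum_nonneg) simp

lemma dispersion_permutes:
  assumes "\<sigma> permutes I"
  shows "dispersion I (f \<circ> \<sigma>) = dispersion I f"
proof -
  have "dispersion I (f \<circ> \<sigma>) = (\<Sum>i\<in>I. \<Sum>y\<in>I. \<bar>f (\<sigma> i) - f y\<bar>)"
    unfolding dispersion_def o_def
    using assms by (intro sum.cong refl sum_permutes_reindex[of \<sigma> I "\<lambda>y. \<bar>f _ - f y\<bar>"])
  also have "\<dots> = dispersion I f"
    unfolding dispersion_def using assms by (rule sum_permutes_reindex)
  finally show ?thesis .
qed

lemma dispersion_le_mono_on: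
  fixes h :: "'a::linorder \<Rightarrow> real"
  assumes "finite I" "I \<noteq> {}" "mono_on I h"
  shows "dispersion I h \<le> real (card I) ^ 2 * (h (Max I) - h (Min I))"
proof -
  have "\<bar>h i - h j\<bar> \<le> h (Max I) - h (Min I)" if "i \<in> I" "j \<in> I" for i j
    using that assms monotone_onD[OF assms(3)] by (smt (verit) Max_ge Min_le Max_in Min_in)
  then have "dispersion I h \<le> (\<Sum>i\<in>I. \<Sum>j\<in>I. h (Max I) - h (Min I))"
    unfolding dispersion_def by (intro sum_mono) auto
  then show ?thesis
    by (simp add: power2_eq_square)
qed

text \<open>All terms on the right are nonnegative, and the one at \<open>(Max I, Min I)\<close> alone bounds
  each dispersion up to the factor \<open>card I ^ 2\<close>.\<close>

lemma dispersion_mult_le_sum_diff_mult: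
  fixes f g :: "'a::linorder \<Rightarrow> real"
  assumes "finite I" "mono_on I f" "mono_on I g"
  shows "dispersion I f * dispersion I g
           \<le> real (card I) ^ 4 * (\<Sum>i\<in>I. \<Sum>j\<in>I. (f i - f j) * (g i - g j))"
proof (cases "I = {}")
  case False
  define m where "m = Min I"
  define M where "M = Max I"
  have mM: "m \<in> I" "M \<in> I" "m \<le> M"
    using assms(1) False by (auto simp: m_def M_def)
  have nonneg: "0 \<le> (f i - f j) * (g i - g j)" if "i \<in> I" "j \<in> I" for i j
    using that monotone_onD[OF assms(2)] monotone_onD[OF assms(3)]
    by (cases "i \<le> j") (auto intro: mult_nonpos_nonpos mult_nonneg_nonneg)
  have "f m \<le> f M"
    using mM monotone_onD[OF assms(2)] by auto
  then have "dispersion I f * dispersion I g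
      \<le> (real (card I) ^ 2 * (f M - f m)) * (real (card I) ^ 2 * (g M - g m))"
    using dispersion_le_mono_on[OF assms(1) False] assms(2,3) dispersion_nonneg
    unfolding m_def M_def by (intro mult_mono) auto
  also have "\<dots> = real (card I) ^ 4 * ((f M - f m) * (g M - g m))"
    by (simp add: algebra_simps power_numeral_reduce)
  also have "\<dots> \<le> real (card I) ^ 4 * (\<Sum>j\<in>I. (f M - f j) * (g M - g j))"
    using assms(1) mM nonneg by (intro mult_left_mono member_le_sum) auto
  also have "\<dots> \<le> real (card I) ^ 4 * (\<Sum>i\<in>I. \<Sum>j\<in>I. (f i - f j) * (g i - g j))"
    using assms(1) mM nonneg by (intro mult_left_mono member_le_sum[of M] sum_nonneg) auto
  finally show ?thesis .
qed (simp add: dispersion_def)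

lemma dispersion_lessThan: "3 * dispersion {..<n} real = real n * (real n - 1) * (real n + 1)"
proof (induction n)
  case 0
  then show ?case
    by (simp add: dispersion_def)
next
  case (Suc n)
  have "(\<Sum>i<n. \<bar>real i - real n\<bar>) = real n * real n - (\<Sum>i<n. real i)"
    by (simp add: sum_subtractf abs_if)
  moreover have "dispersion {..<Suc n} real
      = dispersion {..<n} real + (\<Sum>i<n. \<bar>real i - real n\<bar>) + (\<Sum>j<n. \<bar>real n - real j\<bar>)"
    by (simp add: dispersion_def sum.distrib)
  ultimately show ?case
    using Suc sum_lessThan_real[of n] by (simp add: abs_minus_commute algebra_simps)
qed

lemma sum_permutes_abs_diff:
  assumes "a < n" "b < n" "a \<noteq> b"
  shows "3 * (\<Sum>p | p permutes {..<n}. \<bar>real (p a) - real (p b)\<bar>) = fact n * (real n + 1)"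
proof -
  let ?S = "\<Sum>p | p permutes {..<n}. \<bar>real (p a) - real (p b)\<bar>"
  have "real n * (real n - 1) * ?S = fact n * dispersion {..<n} real"
    using sum_permutes_apply2[of "{..<n}" a b "\<lambda>x y. \<bar>real x - real y\<bar>"] assms
    by (simp add: dispersion_def)
  then have "real n * (real n - 1) * (3 * ?S) = fact n * (3 * dispersion {..<n} real)"
    by (simp add: mult_ac)
  also have "\<dots> = real n * (real n - 1) * (fact n * (real n + 1))"
    unfolding dispersion_lessThan by (simp add: mult_ac)
  finally have "real n * (real n - 1) * (3 * ?S) = real n * (real n - 1) * (fact n * (real n + 1))" .
  moreover have "real n * (real n - 1) \<noteq> 0"
    using assms by auto
  ultimately show ?thesis
    by simp
qed

lemma card_subsets_containing_pair:
  assumes "finite A" "i \<in> A" "j \<in> A" "i \<noteq> j" "2 \<le> k"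
  shows "card {I. I \<subseteq> A \<and> card I = k \<and> i \<in> I \<and> j \<in> I} = (card A - 2) choose (k - 2)"
proof -
  let ?K = "{I. I \<subseteq> A \<and> card I = k \<and> i \<in> I \<and> j \<in> I}"
  let ?L = "{J. J \<subseteq> A - {i, j} \<and> card J = k - 2}"
  have "bij_betw (\<lambda>I. I - {i, j}) ?K ?L"
  proof (rule bij_betw_byWitness[where f' = "\<lambda>J. J \<union> {i, j}"])
    show "(\<lambda>I. I - {i, j}) ` ?K \<subseteq> ?L"
      using assms(1,4) by (auto simp: card_Diff_subset finite_subset)
    show "(\<lambda>J. J \<union> {i, j}) ` ?L \<subseteq> ?K"
    proof
      fix I assume "I \<in> (\<lambda>J. J \<union> {i, j}) ` ?L"
      then obtain J where J: "J \<subseteq> A - {i, j}" "card J = k - 2" "I = J \<union> {i, j}"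
        by auto
      then have "finite J" "i \<notin> J" "j \<notin> J"
        using assms(1) finite_subset by auto
      then show "I \<in> ?K"
        using J assms by auto
    qed
  qed auto
  then have "card ?K = card ?L"
    by (rule bij_betw_same_card)
  also have "\<dots> = (card A - 2) choose (k - 2)"
    using assms by (simp add: n_subsets card_Diff_subset numeral_2_eq_2)
  finally show ?thesis .
qed

lemma sum_of_bool_mem_mult:
  fixes g :: "'a \<Rightarrow> real"
  assumes "finite A" "I \<subseteq> A"
  shows "(\<Sum>i\<in>A. of_bool (i \<in> I) * g i) = (\<Sum>i\<in>I. g i)"
proof -
  have "A \<inter> {i. i \<in> I} = I"
    using assms(2) by auto
  then show ?thesis
    using assms(1) by simp
qed

lemma sum_dispersion_subsets:
  assumes "finite A" "2 \<le> k"
  shows "(\<Sum>I | I \<subseteq> A \<and> card I = k. dispersion I f)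
           = real ((card A - 2) choose (k - 2)) * dispersion A f"
proof -
  let ?K = "{I. I \<subseteq> A \<and> card I = k}" and ?C = "real ((card A - 2) choose (k - 2))"
  have "finite ?K"
    by (rule finite_subset[of _ "Pow A"]) (use assms(1) in auto)
  have restrict: "dispersion I f
      = (\<Sum>i\<in>A. \<Sum>j\<in>A. of_bool (i \<in> I) * (of_bool (j \<in> I) * \<bar>f i - f j\<bar>))" if "I \<in> ?K" for I
    using that unfolding dispersion_def
    by (simp only: sum_of_bool_mem_mult[OF assms(1)] sum_distrib_left[symmetric] mem_Collect_eq)
  have count: "(\<Sum>I\<in>?K. of_bool (i \<in> I) * (of_bool (j \<in> I) * \<bar>f i - f j\<bar>)) = ?C * \<bar>f i - f j\<bar>"
    if "i \<in> A" "j \<in> A" for i j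
  proof (cases "i = j")
    case False
    have "?K \<inter> {I. i \<in> I \<and> j \<in> I} = {I. I \<subseteq> A \<and> card I = k \<and> i \<in> I \<and> j \<in> I}"
      by auto
    then have "(\<Sum>I\<in>?K. of_bool (i \<in> I \<and> j \<in> I)) = ?C"
      using card_subsets_containing_pair[OF assms(1) that False assms(2)] \<open>finite ?K\<close>
      by (subst sum_of_bool_eq) simp_all
    then show ?thesis
      by (simp only: of_bool_conj mult.assoc[symmetric] sum_distrib_right[symmetric])
  qed simp
  have "(\<Sum>I\<in>?K. dispersion I f)
      = (\<Sum>I\<in>?K. \<Sum>i\<in>A. \<Sum>j\<in>A. of_bool (i \<in> I) * (of_bool (j \<in> I) * \<bar>f i - f j\<bar>))"
    using restrict by (rule sum.cong[OF refl])
  also have "\<dots> = (\<Sum>i\<in>A. \<Sum>I\<in>?K. \<Sum>j\<in>A. of_bool (i \<in> I) * (of_bool (j \<in> I) * \<bar>f i - f j\<bar>))"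
    by (rule sum.swap)
  also have "\<dots> = (\<Sum>i\<in>A. \<Sum>j\<in>A. \<Sum>I\<in>?K. of_bool (i \<in> I) * (of_bool (j \<in> I) * \<bar>f i - f j\<bar>))"
    by (rule sum.cong[OF refl sum.swap])
  also have "\<dots> = (\<Sum>i\<in>A. \<Sum>j\<in>A. ?C * \<bar>f i - f j\<bar>)"
    by (intro sum.cong refl) (simp add: count)
  also have "\<dots> = ?C * dispersion A f"
    by (simp add: dispersion_def sum_distrib_left)
  finally show ?thesis .
qed

section \<open>Occurrences of the increasing pattern\<close>

lemma sum_sum_diff_mult_diff:
  fixes a b :: "'a \<Rightarrow> real"
  shows "(\<Sum>i\<in>I. \<Sum>j\<in>I. (a i - a j) * (b i - b j))
           = 2 * real (card I) * (\<Sum>i\<in>I. a i * b i) - 2 * (\<Sum>i\<in>I. a i) * (\<Sum>i\<in>I. b i)"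
proof -
  have "(a i - a j) * (b i - b j) = a i * b i + a j * b j - a i * b j - a j * b i" for i j
    by (simp add: algebra_simps)
  then have "(\<Sum>i\<in>I. \<Sum>j\<in>I. (a i - a j) * (b i - b j))
      = (\<Sum>i\<in>I. \<Sum>j\<in>I. a i * b i) + (\<Sum>i\<in>I. \<Sum>j\<in>I. a j * b j)
        - (\<Sum>i\<in>I. \<Sum>j\<in>I. a i * b j) - (\<Sum>i\<in>I. \<Sum>j\<in>I. a j * b i)"
    by (simp only: sum.distrib sum_subtractf)
  also have "(\<Sum>i\<in>I. \<Sum>j\<in>I. a i * b i) = real (card I) * (\<Sum>i\<in>I. a i * b i)"
    by (simp add: sum_distrib_left mult.commute)
  also have "(\<Sum>i\<in>I. \<Sum>j\<in>I. a j * b j) = real (card I) * (\<Sum>i\<in>I. a i * b i)"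
    by simp
  also have "(\<Sum>i\<in>I. \<Sum>j\<in>I. a i * b j) = (\<Sum>i\<in>I. a i) * (\<Sum>i\<in>I. b i)"
    by (simp add: sum_product)
  also have "(\<Sum>i\<in>I. \<Sum>j\<in>I. a j * b i) = (\<Sum>i\<in>I. a i) * (\<Sum>i\<in>I. b i)"
    by (subst sum.swap) (simp add: sum_product)
  finally show ?thesis
    by simp
qed

definition local_spearman :: "nat set \<Rightarrow> (nat \<Rightarrow> nat) \<Rightarrow> real" where
  "local_spearman I p
     = (\<Sum>i\<in>I. \<Sum>j\<in>I. (real i - real j) * (real (p i) - real (p j))) / (2 * real (card I))"

lemma spearman_eq_local_spearman_plus:
  assumes "I \<subseteq> {..<n}"
  shows "spearman n p = local_spearman I p + (\<Sum>i\<in>{..<n} - I. centred n i * centred n (p i))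
           + (\<Sum>i\<in>I. centred n i) * (\<Sum>i\<in>I. centred n (p i)) / real (card I)"
proof -
  have "finite I"
    using assms finite_subset by blast
  have "local_spearman I p
      = (\<Sum>i\<in>I. \<Sum>j\<in>I. (centred n i - centred n j) * (centred n (p i) - centred n (p j)))
        / (2 * real (card I))"
    unfolding local_spearman_def by (simp add: centred_def)
  also have "\<dots> = (\<Sum>i\<in>I. centred n i * centred n (p i))
      - (\<Sum>i\<in>I. centred n i) * (\<Sum>i\<in>I. centred n (p i)) / real (card I)"
    unfolding sum_sum_diff_mult_diff using \<open>finite I\<close> by (cases "I = {}") (simp_all add: field_simps)
  finally have "local_spearman I p = \<dots>" .
  moreover have "spearman n p
      = (\<Sum>i\<in>I. centred n i * centred n (p i)) + (\<Sum>i\<in>{..<n} - I. centred n i * centred n (p i))"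
    unfolding spearman_def using sum.subset_diff[OF assms] by (simp add: add.commute)
  ultimately show ?thesis
    by simp
qed

lemma sum_local_spearman:
  assumes "I \<subseteq> {..<n}"
  shows "(\<Sum>p | p permutes {..<n}. local_spearman I p) = 0"
proof -
  let ?P = "{p. p permutes {..<n}}"
  have "(\<Sum>p\<in>?P. real (p i) - real (p j)) = 0" if "i \<in> I" "j \<in> I" for i j
    using sum_permutes_apply_eq[of i "{..<n}" j real] that assms by (auto simp: sum_subtractf)
  then have "(\<Sum>i\<in>I. \<Sum>j\<in>I. (real i - real j) * (\<Sum>p\<in>?P. real (p i) - real (p j))) = 0"
    by simp
  then have "(\<Sum>p\<in>?P. \<Sum>i\<in>I. \<Sum>j\<in>I. (real i - real j) * (real (p i) - real (p j))) = 0"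
    by (simp add: sum.swap[of _ ?P] sum_distrib_left)
  then show ?thesis
    unfolding local_spearman_def by (simp add: sum_divide_distrib[symmetric])
qed

lemma sum_strict_mono_on_spearman_eq:
  assumes "I \<subseteq> {..<n}"
  shows "(\<Sum>p | p permutes {..<n}. of_bool (strict_mono_on I p) * spearman n p)
           = (\<Sum>p | p permutes {..<n}. of_bool (strict_mono_on I p) * local_spearman I p)"
proof -
  define R where "R p = spearman n p - local_spearman I p" for p
  have "R (p \<circ> \<sigma>) = R p" if "\<sigma> permutes I" for p \<sigma>
  proof -
    have "(\<Sum>i\<in>{..<n} - I. centred n i * centred n (p (\<sigma> i)))
        = (\<Sum>i\<in>{..<n} - I. centred n i * centred n (p i))"
      using that by (intro sum.cong refl) (simp add: permutes_not_in)
    moreover have "(\<Sum>i\<in>I. centred n (p (\<sigma> i))) = (\<Sum>i\<in>I. centred n (p i))"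
      using that by (rule sum_permutes_reindex[of \<sigma> I "\<lambda>x. centred n (p x)"])
    ultimately show ?thesis
      unfolding R_def spearman_eq_local_spearman_plus[OF assms, of p]
        spearman_eq_local_spearman_plus[OF assms, of "p \<circ> \<sigma>"]
      by simp
  qed
  then have "(\<Sum>p | p permutes {..<n}. of_bool (strict_mono_on I p) * R p)
      = (\<Sum>p | p permutes {..<n}. R p) / fact (card I)"
    using assms by (intro sum_permutes_strict_mono_on) auto
  also have "\<dots> = 0"
    using sum_spearman[of n] sum_local_spearman[OF assms] by (simp add: R_def sum_subtractf)
  finally show ?thesis
    by (simp add: R_def right_diff_distrib sum_subtractf del: sum_mult_of_bool_eq sum_of_bool_mult_eq)
qed

lemma dispersion_mult_le_local_spearman:
  assumes "finite I" "strict_mono_on I p"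
  shows "dispersion I real * dispersion I (real \<circ> p) \<le> 2 * real (card I) ^ 5 * local_spearman I p"
proof (cases "I = {}")
  case True
  then show ?thesis
    by (simp add: dispersion_def local_spearman_def)
next
  case False
  have "mono_on I (real :: nat \<Rightarrow> real)" "mono_on I (real \<circ> p)"
    by (auto intro!: mono_onI dest: strict_mono_on_leD[OF assms(2)])
  from dispersion_mult_le_sum_diff_mult[OF assms(1) this]
  have "dispersion I real * dispersion I (real \<circ> p)
      \<le> real (card I) ^ 4 * (\<Sum>i\<in>I. \<Sum>j\<in>I. (real i - real j) * (real (p i) - real (p j)))"
    by simp
  also have "\<dots> = 2 * real (card I) ^ 5 * local_spearman I p"
  proof -
    have "real (card I) ^ 5 = real (card I) ^ 4 * real (card I)" "real (card I) \<noteq> 0"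
      using assms(1) False by (simp_all add: eval_nat_numeral)
    then show ?thesis
      by (simp add: local_spearman_def)
  qed
  finally show ?thesis .
qed

lemma obtain_distinct_if_card_ge_2:
  assumes "2 \<le> card A"
  obtains a b where "a \<in> A" "b \<in> A" "a \<noteq> b"
proof -
  obtain T where "T \<subseteq> A" "card T = 2"
    using obtain_subset_with_card_n[OF assms] by blast
  then show thesis
    using that by (force simp: card_2_iff)
qed

lemma sum_strict_mono_on_dispersion_ge:
  assumes "I \<subseteq> {..<n}" "2 \<le> card I"
  shows "fact n * (real n + 1)
           \<le> 3 * fact (card I)
               * (\<Sum>p | p permutes {..<n}. of_bool (strict_mono_on I p) * dispersion I (real \<circ> p))"
proof -
  let ?P = "{p. p permutes {..<n}}" and ?E = "\<lambda>p. dispersion I (real \<circ> p)"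
  have "finite I"
    using assms(1) finite_subset by blast
  obtain a b where ab: "a \<in> I" "b \<in> I" "a \<noteq> b"
    using obtain_distinct_if_card_ge_2[OF assms(2)] .
  have "a < n" "b < n"
    using ab assms(1) by auto
  then have "fact n * (real n + 1) = 3 * (\<Sum>p\<in>?P. \<bar>real (p a) - real (p b)\<bar>)"
    using sum_permutes_abs_diff ab(3) by simp
  also have "\<dots> \<le> 3 * (\<Sum>p\<in>?P. ?E p)"
  proof -
    have "\<bar>real (p a) - real (p b)\<bar> \<le> ?E p" for p
    proof -
      have "\<bar>real (p a) - real (p b)\<bar> \<le> (\<Sum>j\<in>I. \<bar>real (p a) - real (p j)\<bar>)"
        using ab \<open>finite I\<close> by (intro member_le_sum) auto
      also have "\<dots> \<le> ?E p"
        unfolding dispersion_def o_def using ab \<open>finite I\<close>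
        by (intro member_le_sum[of a] sum_nonneg) auto
      finally show ?thesis .
    qed
    then show ?thesis
      by (simp add: sum_mono)
  qed
  also have "(\<Sum>p\<in>?P. ?E p) = fact (card I) * (\<Sum>p\<in>?P. of_bool (strict_mono_on I p) * ?E p)"
    using sum_permutes_strict_mono_on[of "{..<n}" I ?E] assms(1)
    by (simp add: dispersion_permutes comp_assoc[symmetric])
  finally show ?thesis
    by simp
qed

lemma sum_strict_mono_on_spearman_ge:
  assumes "I \<subseteq> {..<n}" "2 \<le> card I"
  shows "dispersion I real * fact n * (real n + 1)
           \<le> 6 * real (card I) ^ 5 * fact (card I)
               * (\<Sum>p | p permutes {..<n}. of_bool (strict_mono_on I p) * spearman n p)"
proof -
  let ?P = "{p. p permutes {..<n}}" and ?k = "card I"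
  define E where "E = (\<Sum>p\<in>?P. of_bool (strict_mono_on I p) * dispersion I (real \<circ> p))"
  define S where "S = (\<Sum>p\<in>?P. of_bool (strict_mono_on I p) * spearman n p)"
  have "finite I"
    using assms(1) finite_subset by blast
  have "dispersion I real * E
      \<le> (\<Sum>p\<in>?P. of_bool (strict_mono_on I p) * (2 * real ?k ^ 5 * local_spearman I p))"
    unfolding E_def sum_distrib_left
    using dispersion_mult_le_local_spearman[OF \<open>finite I\<close>] by (intro sum_mono) (simp add: algebra_simps)
  also have "\<dots> = 2 * real ?k ^ 5 * (\<Sum>p\<in>?P. of_bool (strict_mono_on I p) * local_spearman I p)"
    by (simp add: sum_distrib_left mult.left_commute del: sum_mult_of_bool_eq sum_of_bool_mult_eq)
  also have "\<dots> = 2 * real ?k ^ 5 * S"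
    unfolding S_def by (simp only: sum_strict_mono_on_spearman_eq[OF assms(1)])
  finally have DE: "dispersion I real * E \<le> 2 * real ?k ^ 5 * S" .
  have "dispersion I real * fact n * (real n + 1) = dispersion I real * (fact n * (real n + 1))"
    by simp
  also have "\<dots> \<le> dispersion I real * (3 * fact ?k * E)"
    using sum_strict_mono_on_dispersion_ge[OF assms] dispersion_nonneg unfolding E_def
    by (rule mult_left_mono)
  also have "\<dots> = 3 * fact ?k * (dispersion I real * E)"
    by (simp add: mult_ac)
  also have "\<dots> \<le> 3 * fact ?k * (2 * real ?k ^ 5 * S)"
    using DE by (rule mult_left_mono) simp
  finally show ?thesis
    unfolding S_def by (simp add: mult_ac)
qed

lemma inc_occurrences_eq_sum:
  "real (inc_occurrences k n p) = (\<Sum>I | I \<subseteq> {..<n} \<and> card I = k. of_bool (strict_mono_on I p))"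
proof -
  have "finite {I. I \<subseteq> {..<n} \<and> card I = k}"
    by (rule finite_subset[of _ "Pow {..<n}"]) auto
  moreover have "{I. I \<subseteq> {..<n} \<and> card I = k} \<inter> {I. strict_mono_on I p}
      = {I. I \<subseteq> {..<n} \<and> card I = k \<and> (\<forall>i\<in>I. \<forall>j\<in>I. i < j \<longrightarrow> p i < p j)}"
    by (auto simp: strict_mono_on_def)
  ultimately show ?thesis
    unfolding inc_occurrences_def by simp
qed

lemma sum_inc_occurrences_spearman_ge:
  assumes "2 \<le> k"
  shows "real ((n - 2) choose (k - 2)) * fact n * real n * (real n - 1) * (real n + 1)\<^sup>2
           \<le> 18 * real k ^ 5 * fact k
               * (\<Sum>p | p permutes {..<n}. real (inc_occurrences k n p) * spearman n p)"
proof -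
  let ?P = "{p. p permutes {..<n}}" and ?K = "{I. I \<subseteq> {..<n} \<and> card I = k}"
  define S where "S = (\<Sum>p\<in>?P. real (inc_occurrences k n p) * spearman n p)"
  define C where "C = real ((n - 2) choose (k - 2))"
  have "S = (\<Sum>I\<in>?K. \<Sum>p\<in>?P. of_bool (strict_mono_on I p) * spearman n p)"
    unfolding S_def inc_occurrences_eq_sum sum_distrib_right by (rule sum.swap)
  then have "6 * real k ^ 5 * fact k * S
      = (\<Sum>I\<in>?K. 6 * real k ^ 5 * fact k * (\<Sum>p\<in>?P. of_bool (strict_mono_on I p) * spearman n p))"
    by (simp only: sum_distrib_left)
  also have "\<dots> \<ge> (\<Sum>I\<in>?K. dispersion I real * fact n * (real n + 1))"
    using sum_strict_mono_on_spearman_ge assms by (intro sum_mono) auto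
  also have "(\<Sum>I\<in>?K. dispersion I real * fact n * (real n + 1))
      = C * dispersion {..<n} real * fact n * (real n + 1)"
    unfolding C_def sum_distrib_right[symmetric] sum_dispersion_subsets[OF finite_lessThan assms]
    by simp
  finally have bound: "C * dispersion {..<n} real * fact n * (real n + 1) \<le> 6 * real k ^ 5 * fact k * S" .
  have "C * fact n * real n * (real n - 1) * (real n + 1)\<^sup>2
      = C * (3 * dispersion {..<n} real) * fact n * (real n + 1)"
    unfolding dispersion_lessThan by (simp add: power2_eq_square mult_ac)
  also have "\<dots> = 3 * (C * dispersion {..<n} real * fact n * (real n + 1))"
    by (simp only: mult_ac)
  also have "\<dots> \<le> 3 * (6 * real k ^ 5 * fact k * S)"
    using bound by (rule mult_left_mono) simp
  also have "\<dots> = 18 * real k ^ 5 * fact k * S"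
    by simp
  finally show ?thesis
    unfolding S_def C_def .
qed

section \<open>The variance bound\<close>

lemma variance_pmf_of_set:
  fixes f :: "'a \<Rightarrow> real"
  assumes "finite S" "S \<noteq> {}"
  shows "measure_pmf.variance (pmf_of_set S) f
           = (\<Sum>x\<in>S. (f x - (\<Sum>y\<in>S. f y) / real (card S))\<^sup>2) / real (card S)"
  using assms by (simp add: integral_pmf_of_set)

lemma sum_mult_sq_le_variance_pmf_of_set:
  fixes f g :: "'a \<Rightarrow> real"
  assumes "finite S" "S \<noteq> {}" "(\<Sum>x\<in>S. g x) = 0"
  shows "(\<Sum>x\<in>S. f x * g x)\<^sup>2
           \<le> real (card S) * measure_pmf.variance (pmf_of_set S) f * (\<Sum>x\<in>S. (g x)\<^sup>2)"
proof -
  define m where "m = (\<Sum>y\<in>S. f y) / real (card S)"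
  have "(\<Sum>x\<in>S. f x * g x) = (\<Sum>x\<in>S. (f x - m) * g x)"
    using assms(3) by (simp add: left_diff_distrib sum_subtractf sum_distrib_left[symmetric])
  then have "(\<Sum>x\<in>S. f x * g x)\<^sup>2 \<le> (\<Sum>x\<in>S. (f x - m)\<^sup>2) * (\<Sum>x\<in>S. (g x)\<^sup>2)"
    by (simp add: Cauchy_Schwarz_ineq_sum)
  also have "(\<Sum>x\<in>S. (f x - m)\<^sup>2) = real (card S) * measure_pmf.variance (pmf_of_set S) f"
    using assms(1,2) by (simp add: variance_pmf_of_set m_def card_gt_0_iff)
  finally show ?thesis .
qed

lemma variance_pmf_of_set_ge:
  fixes f g :: "'a \<Rightarrow> real"
  assumes "finite S" "S \<noteq> {}" "(\<Sum>x\<in>S. g x) = 0"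
    and "0 \<le> L" "L \<le> (\<Sum>x\<in>S. f x * g x)" "(\<Sum>x\<in>S. (g x)\<^sup>2) \<le> B" "0 < B"
  shows "L\<^sup>2 / (real (card S) * B) \<le> measure_pmf.variance (pmf_of_set S) f"
proof -
  let ?V = "measure_pmf.variance (pmf_of_set S) f"
  have "L\<^sup>2 \<le> (\<Sum>x\<in>S. f x * g x)\<^sup>2"
    using assms(4,5) by (intro power_mono) auto
  also have "\<dots> \<le> real (card S) * ?V * (\<Sum>x\<in>S. (g x)\<^sup>2)"
    using assms(1-3) by (rule sum_mult_sq_le_variance_pmf_of_set)
  also have "\<dots> \<le> real (card S) * ?V * B"
    using assms(6) measure_pmf.variance_positive by (intro mult_left_mono) auto
  finally show ?thesis
    using assms(1,2,7) by (simp add: divide_le_eq card_gt_0_iff mult_ac)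
qed

lemma power3_le_pred_mult_succ_sq:
  fixes x :: real
  assumes "2 \<le> x"
  shows "x ^ 3 \<le> (x - 1) * (x + 1)\<^sup>2"
proof -
  have "1 \<le> x * (x - 1)"
    using assms mult_mono[of 1 x 1 "x - 1"] by simp
  moreover have "(x - 1) * (x + 1)\<^sup>2 = x ^ 3 + x * (x - 1) - 1"
    by (simp add: power2_eq_square power3_eq_cube algebra_simps)
  ultimately show ?thesis
    by linarith
qed

lemma variance_inc_occurrences_ge:
  assumes "2 \<le> k" "k \<le> n"
  shows "4 * (real ((n - 2) choose (k - 2)))\<^sup>2 * real n ^ 3 / (9 * real k ^ 10 * (fact k)\<^sup>2)
           \<le> measure_pmf.variance (uniform_perm n) (\<lambda>p. real (inc_occurrences k n p))"
proof -
  let ?P = "{p. p permutes {..<n}}"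
  define C where "C = real ((n - 2) choose (k - 2))"
  define W where "W = (real n - 1) * (real n + 1)\<^sup>2"
  define N where "N = (fact n :: real)"
  define K where "K = 18 * real k ^ 5 * fact k"
  have n: "2 \<le> real n"
    using assms by simp
  then have "0 < N" "0 < W" "0 < K" "0 \<le> C"
    using assms by (simp_all add: N_def W_def K_def C_def)
  have "finite ?P"
    by (simp add: finite_permutations)
  moreover have "?P \<noteq> {}"
    using permutes_id by blast
  moreover have "C * N * real n * W / K \<le> (\<Sum>p\<in>?P. real (inc_occurrences k n p) * spearman n p)"
    using sum_inc_occurrences_spearman_ge[OF assms(1), of n] \<open>0 < K\<close>
    by (simp add: pos_divide_le_eq C_def N_def W_def K_def mult_ac)
  moreover have "(\<Sum>p\<in>?P. (spearman n p)\<^sup>2) \<le> N * (real n)\<^sup>2 * W / 144"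
    using sum_spearman_sq[of n] assms by (simp add: N_def W_def mult_ac)
  ultimately have V: "(C * N * real n * W / K)\<^sup>2 / (real (card ?P) * (N * (real n)\<^sup>2 * W / 144))
      \<le> measure_pmf.variance (uniform_perm n) (\<lambda>p. real (inc_occurrences k n p))"
    unfolding uniform_perm_def using sum_spearman[of n] \<open>0 < N\<close> \<open>0 < W\<close> \<open>0 < K\<close> \<open>0 \<le> C\<close> n
    by (intro variance_pmf_of_set_ge) simp_all
  have "real (card ?P) = N"
    by (simp add: card_permutations N_def)
  have "4 * C\<^sup>2 * real n ^ 3 / (9 * real k ^ 10 * (fact k)\<^sup>2)
      \<le> 4 * C\<^sup>2 * W / (9 * real k ^ 10 * (fact k)\<^sup>2)"
    using power3_le_pred_mult_succ_sq[OF n] \<open>0 \<le> C\<close>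
    unfolding W_def by (intro divide_right_mono mult_left_mono) auto
  also have "\<dots> = (C * N * real n * W / K)\<^sup>2 / (real (card ?P) * (N * (real n)\<^sup>2 * W / 144))"
    unfolding \<open>real (card ?P) = N\<close> K_def using \<open>0 < N\<close> \<open>0 < W\<close> n
    by (simp add: power2_eq_square power_mult_distrib power_mult[symmetric] field_simps)
  also note V
  finally show ?thesis
    unfolding C_def .
qed

lemma binomial_ge_pow:
  assumes "2 \<le> k" "k \<le> n"
  shows "(real n / (3 * real k)) ^ (k - 2) \<le> real ((n - 2) choose (k - 2))"
proof (cases "k = 2")
  case False
  have "real n * (real k - 2) \<le> real n * real k"
    by (intro mult_left_mono) auto
  also have "\<dots> = real k * real n"
    by simp
  also have "\<dots> \<le> real k * (3 * (real n - 2))"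
    using assms False by (intro mult_left_mono) auto
  also have "\<dots> = 3 * real k * (real n - 2)"
    by (simp only: mult_ac)
  finally have "real n * (real k - 2) \<le> 3 * real k * (real n - 2)" .
  then have "real n / (3 * real k) \<le> real (n - 2) / real (k - 2)"
    using assms False by (simp add: field_simps of_nat_diff)
  then have "(real n / (3 * real k)) ^ (k - 2) \<le> (real (n - 2) / real (k - 2)) ^ (k - 2)"
    by (intro power_mono) auto
  also have "\<dots> \<le> real ((n - 2) choose (k - 2))"
    using assms by (intro binomial_ge_n_over_k_pow_k) auto
  finally show ?thesis .
qed simp

lemma binomial_sq_mult_ge:
  assumes "2 \<le> k" "k \<le> n"
  shows "real n ^ (2 * k - 1) / (3 * real k) ^ (2 * k - 4) \<le> (real ((n - 2) choose (k - 2)))\<^sup>2 * real n ^ 3"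
proof -
  have "2 * k - 4 = (k - 2) * 2" "2 * k - 1 = (2 * k - 4) + 3"
    using assms(1) by simp_all
  then have "real n ^ (2 * k - 1) / (3 * real k) ^ (2 * k - 4) = ((real n / (3 * real k)) ^ (k - 2))\<^sup>2 * real n ^ 3"
    by (simp only: power_add power_mult power_divide) simp
  also have "\<dots> \<le> (real ((n - 2) choose (k - 2)))\<^sup>2 * real n ^ 3"
    using binomial_ge_pow[OF assms] by (intro mult_right_mono power_mono) auto
  finally show ?thesis .
qed

theorem proposition2p6:
  fixes k :: nat
  assumes "k \<ge> 2"
  shows "\<exists>c>0. \<forall>n\<ge>k.
           measure_pmf.variance (uniform_perm n) (\<lambda>p. real (inc_occurrences k n p))
             \<ge> c * real n ^ (2 * k - 1)"
proof (intro exI[of _ "4 / (9 * real k ^ 10 * (fact k)\<^sup>2 * (3 * real k) ^ (2 * k - 4))"] conjI allI impI)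
  let ?d = "9 * real k ^ 10 * (fact k)\<^sup>2"
  show "4 / (?d * (3 * real k) ^ (2 * k - 4)) > 0"
    using assms by simp
  fix n assume "k \<le> n"
  have "4 / (?d * (3 * real k) ^ (2 * k - 4)) * real n ^ (2 * k - 1)
      = 4 * (real n ^ (2 * k - 1) / (3 * real k) ^ (2 * k - 4)) / ?d"
    by simp
  also have "\<dots> \<le> 4 * ((real ((n - 2) choose (k - 2)))\<^sup>2 * real n ^ 3) / ?d"
    using binomial_sq_mult_ge[OF assms \<open>k \<le> n\<close>] by (intro divide_right_mono mult_left_mono) auto
  also have "\<dots> \<le> measure_pmf.variance (uniform_perm n) (\<lambda>p. real (inc_occurrences k n p))"
    using variance_inc_occurrences_ge[OF assms \<open>k \<le> n\<close>] by (simp add: mult.assoc)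
  finally show "4 / (?d * (3 * real k) ^ (2 * k - 4)) * real n ^ (2 * k - 1)
      \<le> measure_pmf.variance (uniform_perm n) (\<lambda>p. real (inc_occurrences k n p))" .
qed

end
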